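(* Assume rewards are Gaussian with known variances, $K$ is a power of $2$ (so $m=\log_2K$), $n_s=n/\log_2K$ is an integer, and in every stage $s$ all ideal allocations $\lambda_{s,i}=\sigma_i^2 n_s/\sum_{j\in\mathcal{A}_s}\sigma_j^2$ are integers. Then the arm $\hat I$ returned by \texttt{SHVar} satisfies $$\mathbb{P}(\hat I\neq 1)\le 2\log_2K\,\exp\left[-\frac{n\,\Delta_{\min}^2}{4\log_2K\sum_{j\in\mathcal{A}}\sigma_j^2}\right],$$ where $\Delta_{\min}=\mu_1-\mu_2$.
   Context: Stochastic bandit with arms $\mathcal{A}=[K]$. Each pull of arm $i$ returns an independent reward distributed as $\mathcal{N}(\mu_i,\sigma_i^2)$, independently across pulls. The arms are ordered so that $\mu_1>\mu_2\ge\dots\ge\mu_K$; the gaps are $\Delta_i=\mu_1-\mu_i$. Sequential-halving meta-algorithm with budget $n$: - There are $m=\lceil\log_2K\rceil$ stages, with $\mathcal{A}_1=\mathcal{A}$ and $n_s=\lfloor n/m\rfloor$. - In stage $s$, for rounds $t=1,\dots,n_s$, a base rule selects $I_{s,t}\in\mathcal{A}_s$, and the reward $Y_{s,t,I_{s,t}}$ is observed. - $N_{s,t,i}=\sum_{\ell<t}\mathbb{1}\{I_{s,\ell}=i\}$. - $\hat\mu_{s,i}$ is the average reward of arm $i$ in stage $s$. - $\mathcal{A}_{s+1}$ consists of the $\lceil|\mathcal{A}_s|/2\rceil$ arms with highest $\hat\mu_{s,i}$. - $\hat I$ is the single arm of $\mathcal{A}_{m+1}$. \texttt{SHVar} uses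 the base rule $I_{s,t}\in\arg\max_{i\in\mathcal{A}_s}\sigma_i^2/N_{s,t,i}$, with the convention $\sigma_i^2/0=+\infty$. *)

theory Defs
  imports "HOL-Probability.Probability"
begin

text \<open>Arms are 1,...,K. Rewards of the whole run are given as a table
  Y s t i (stage s, round t, arm i); the learner observes Y s t (I s t).\<close>

definition var_ratio :: "real \<Rightarrow> nat \<Rightarrow> ereal" where
  "var_ratio v k = (if k = 0 then PInfty else ereal (v / real k))"

text \<open>A tie-breaking rule realising the SHVar base rule
  I in argmax_{i in A} sigma_i^2 / N_i  (v i = sigma_i^2).\<close>
definition is_var_rule :: "(nat \<Rightarrow> real) \<Rightarrow> (nat set \<Rightarrow> (nat \<Rightarrow> nat) \<Rightarrow> nat) \<Rightarrow> bool" where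
  "is_var_rule v ch \<longleftrightarrow>
     (\<forall>A N. finite A \<and> A \<noteq> {} \<longrightarrow>
        ch A N \<in> A \<and> (\<forall>j\<in>A. var_ratio (v j) (N j) \<le> var_ratio (v (ch A N)) (N (ch A N))))"

definition is_halving_rule :: "(nat set \<Rightarrow> (nat \<Rightarrow> real) \<Rightarrow> nat set) \<Rightarrow> bool" where
  "is_halving_rule sel \<longleftrightarrow>
     (\<forall>A f. finite A \<and> A \<noteq> {} \<longrightarrow>
        sel A f \<subseteq> A \<and> card (sel A f) = (card A + 1) div 2 \<and>
        (\<forall>i\<in>sel A f. \<forall>j\<in>A - sel A f. f j \<le> f i))"

text \<open>cnt ch A t i = number of pulls of arm i during rounds 1..t of a stage with active set A;
  so N_{s,t,i} = cnt ch A (t-1) i.\<close>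
primrec cnt :: "(nat set \<Rightarrow> (nat \<Rightarrow> nat) \<Rightarrow> nat) \<Rightarrow> nat set \<Rightarrow> nat \<Rightarrow> nat \<Rightarrow> nat" where
  "cnt ch A 0 = (\<lambda>i. 0)"
| "cnt ch A (Suc t) = (let c = cnt ch A t in c(ch A c := c (ch A c) + 1))"

definition pull :: "(nat set \<Rightarrow> (nat \<Rightarrow> nat) \<Rightarrow> nat) \<Rightarrow> nat set \<Rightarrow> nat \<Rightarrow> nat" where
  "pull ch A t = ch A (cnt ch A (t - 1))"

definition muhat :: "(nat set \<Rightarrow> (nat \<Rightarrow> nat) \<Rightarrow> nat) \<Rightarrow> nat \<Rightarrow> (nat \<Rightarrow> nat \<Rightarrow> nat \<Rightarrow> real)
    \<Rightarrow> nat \<Rightarrow> nat set \<Rightarrow> nat \<Rightarrow> real" where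
  "muhat ch ns Y s A i =
     (\<Sum>t\<in>{t\<in>{1..ns}. pull ch A t = i}. Y s t i) / real (card {t\<in>{1..ns}. pull ch A t = i})"

text \<open>sh_set ... k is the active set A_{k+1}: A_1 = {1..K}, and A_{s+1} is obtained from A_s
  using the stage-s rewards.\<close>
primrec sh_set :: "(nat set \<Rightarrow> (nat \<Rightarrow> nat) \<Rightarrow> nat) \<Rightarrow> (nat set \<Rightarrow> (nat \<Rightarrow> real) \<Rightarrow> nat set)
    \<Rightarrow> nat \<Rightarrow> nat \<Rightarrow> (nat \<Rightarrow> nat \<Rightarrow> nat \<Rightarrow> real) \<Rightarrow> nat \<Rightarrow> nat set" where
  "sh_set ch sel K ns Y 0 = {1..K}"
| "sh_set ch sel K ns Y (Suc s) =
     sel (sh_set ch sel K ns Y s) (muhat ch ns Y (Suc s) (sh_set ch sel K ns Y s))"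

definition sh_out :: "(nat set \<Rightarrow> (nat \<Rightarrow> nat) \<Rightarrow> nat) \<Rightarrow> (nat set \<Rightarrow> (nat \<Rightarrow> real) \<Rightarrow> nat set)
    \<Rightarrow> nat \<Rightarrow> nat \<Rightarrow> nat \<Rightarrow> (nat \<Rightarrow> nat \<Rightarrow> nat \<Rightarrow> real) \<Rightarrow> nat" where
  "sh_out ch sel K m ns Y = the_elem (sh_set ch sel K ns Y m)"

end

theory Submission
  imports Defs
begin

text \<open>When all ideal allocations are integers, the variance rule pulls each arm \<open>i\<close> of the
  active set \<open>A\<close> exactly \<open>\<sigma>\<^sub>i\<^sup>2 n\<^sub>s / (\<Sum>j\<in>A. \<sigma>\<^sub>j\<^sup>2)\<close> times, so every
  empirical mean of the stage has variance \<open>(\<Sum>j\<in>A. \<sigma>\<^sub>j\<^sup>2) / n\<^sub>s\<close>. Hence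
  arm \<open>j\<close> beats arm 1 with probability at most \<open>exp (- n\<^sub>s (\<mu>\<^sub>1 - \<mu>\<^sub>2)\<^sup>2 / (4 \<Sum>j. \<sigma>\<^sub>j\<^sup>2))\<close>
  by a Gaussian tail bound. Arm 1 is dropped in a stage only if at least half of the active
  set beats it, which by Markov's inequality for the number of such arms has at most twice
  that probability. The active set of a stage is determined by the earlier stages and is
  therefore independent of the current rewards, and a union bound over the stages finishes
  the argument. Since the tie-breaking of the halving rule need not be measurable, the
  active sets are replaced by the sets reachable under any tie-breaking; almost surely there
  are no ties, and then only one set is reachable.\<close>

section \<open>Exact allocation of the variance rule\<close>

definition allocation :: "(nat \<Rightarrow> real) \<Rightarrow> nat \<Rightarrow> nat set \<Rightarrow> nat \<Rightarrow> real" where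
  "allocation v n A i = v i * real n / (\<Sum>j\<in>A. v j)"

definition integral_allocation :: "(nat \<Rightarrow> real) \<Rightarrow> nat \<Rightarrow> nat set \<Rightarrow> bool" where
  "integral_allocation v n A \<longleftrightarrow> (\<forall>i\<in>A. allocation v n A i \<in> \<int>)"

lemma sum_allocation:
  assumes "finite A" "A \<noteq> {}" "\<forall>i\<in>A. v i > 0"
  shows "(\<Sum>i\<in>A. allocation v n A i) = real n"
proof -
  have "(\<Sum>j\<in>A. v j) > 0" using assms by (intro sum_pos) auto
  then show ?thesis
    by (simp add: allocation_def sum_divide_distrib[symmetric] sum_distrib_right[symmetric])
qed

lemma var_rule_mem:
  assumes "is_var_rule v ch" "finite A" "A \<noteq> {}"
  shows "ch A N \<in> A"
  using assms unfolding is_var_rule_def by blast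

lemma sum_cnt:
  assumes "is_var_rule v ch" "finite A" "A \<noteq> {}"
  shows "(\<Sum>i\<in>A. cnt ch A t i) = t"
proof (induction t)
  case (Suc t)
  have "ch A (cnt ch A t) \<in> A" using var_rule_mem[OF assms] .
  with Suc assms(2) show ?case
    by (simp add: Let_def sum.delta_remove[where S=A] sum.remove[where A=A])
qed simp

lemma cnt_eq_card_pulls: "cnt ch A t i = card {u\<in>{1..t}. pull ch A u = i}"
proof (induction t)
  case (Suc t)
  have pulls: "{u\<in>{1..Suc t}. pull ch A u = i} =
      (if pull ch A (Suc t) = i then insert (Suc t) else id) {u\<in>{1..t}. pull ch A u = i}"
    by (auto simp: le_Suc_eq)
  show ?case
    unfolding pulls using Suc.IH by (auto simp: pull_def Let_def)
qed simp

text \<open>If the chosen arm had already reached its allocation, maximality of its ratio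
  \<open>\<sigma>\<^sup>2 / N\<close> would force every arm to have reached its own, i.e. \<open>n\<close> pulls in total.\<close>

lemma var_rule_below_allocation:
  assumes rule: "is_var_rule v ch" and A: "finite A" "A \<noteq> {}" and pos: "\<forall>i\<in>A. v i > 0"
    and lt: "(\<Sum>i\<in>A. c i) < n" and le: "\<forall>i\<in>A. real (c i) \<le> allocation v n A i"
  shows "real (c (ch A c)) < allocation v n A (ch A c)"
proof (rule ccontr)
  define k where "k = ch A c"
  define S where "S = (\<Sum>j\<in>A. v j)"
  assume "\<not> real (c (ch A c)) < allocation v n A (ch A c)"
  moreover have "real (c k) \<le> v k * real n / S"
    using le var_rule_mem[OF rule A] unfolding k_def S_def allocation_def by blast
  ultimately have ck: "real (c k) = v k * real n / S"
    unfolding k_def S_def allocation_def by linarith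
  have k: "k \<in> A" unfolding k_def using var_rule_mem[OF rule A] .
  have S: "S > 0" unfolding S_def using A pos by (intro sum_pos) auto
  have "n > 0" using lt by simp
  then have "v k * real n / S > 0" using k pos S by simp
  then have "c k \<noteq> 0" using ck by auto
  then have ratio_k: "var_ratio (v k) (c k) = ereal (S / real n)"
    using ck k pos S \<open>n > 0\<close> by (simp add: var_ratio_def field_simps)
  have "allocation v n A j \<le> real (c j)" if j: "j \<in> A" for j
  proof -
    have max: "var_ratio (v j) (c j) \<le> ereal (S / real n)"
      using rule A j ratio_k unfolding is_var_rule_def k_def by metis
    then have "c j \<noteq> 0" by (cases "c j = 0") (auto simp: var_ratio_def)
    with max S \<open>n > 0\<close> show ?thesis
      by (simp add: var_ratio_def allocation_def S_def[symmetric] field_simps)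
  qed
  then have "(\<Sum>j\<in>A. allocation v n A j) \<le> (\<Sum>j\<in>A. real (c j))" by (rule sum_mono)
  with lt show False by (simp add: sum_allocation[OF A pos] flip: of_nat_sum)
qed

lemma cnt_le_allocation:
  assumes rule: "is_var_rule v ch" and A: "finite A" "A \<noteq> {}" and pos: "\<forall>i\<in>A. v i > 0"
    and int: "integral_allocation v n A" and "t \<le> n"
  shows "\<forall>i\<in>A. real (cnt ch A t i) \<le> allocation v n A i"
  using \<open>t \<le> n\<close>
proof (induction t)
  case 0
  then show ?case using A pos by (auto simp: allocation_def intro!: divide_nonneg_pos sum_pos)
next
  case (Suc t)
  define c where "c = cnt ch A t"
  define k where "k = ch A c"
  have IH: "\<forall>i\<in>A. real (c i) \<le> allocation v n A i" using Suc unfolding c_def by simp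
  have "(\<Sum>i\<in>A. c i) < n" using Suc.prems sum_cnt[OF rule A, of t] unfolding c_def by simp
  then have "real (c k) < allocation v n A k"
    unfolding k_def by (rule var_rule_below_allocation[OF rule A pos _ IH])
  moreover obtain z where "allocation v n A k = of_int z"
    using int var_rule_mem[OF rule A] unfolding k_def integral_allocation_def by (meson Ints_cases)
  ultimately have "real (c k) + 1 \<le> allocation v n A k"
    using int_less_real_le[of "int (c k)" z] by simp
  with IH show ?case by (auto simp: Let_def c_def[symmetric] k_def[symmetric])
qed

lemma card_pulls_eq_allocation:
  assumes rule: "is_var_rule v ch" and A: "finite A" "A \<noteq> {}" and pos: "\<forall>i\<in>A. v i > 0"
    and int: "integral_allocation v n A" and i: "i \<in> A"
  shows "real (card {t\<in>{1..n}. pull ch A t = i}) = allocation v n A i"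
proof (rule ccontr)
  have le: "\<forall>i\<in>A. real (cnt ch A n i) \<le> allocation v n A i"
    using cnt_le_allocation[OF rule A pos int order_refl] .
  assume "real (card {t\<in>{1..n}. pull ch A t = i}) \<noteq> allocation v n A i"
  with le i have "(\<Sum>j\<in>A. real (cnt ch A n j)) < (\<Sum>j\<in>A. allocation v n A j)"
    by (intro sum_strict_mono_ex1[OF A(1)]) (auto simp: cnt_eq_card_pulls less_le)
  then show False by (simp add: sum_allocation[OF A pos] sum_cnt[OF rule A] flip: of_nat_sum)
qed

section \<open>Gaussian estimates\<close>

lemma normal_density_le_shift:
  assumes "\<sigma> > 0" "\<mu> \<le> 0" "x \<ge> 0"
  shows "normal_density \<mu> \<sigma> x \<le> exp (- \<mu>\<^sup>2 / (2 * \<sigma>\<^sup>2)) * normal_density 0 \<sigma> x"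
proof -
  have "\<mu>\<^sup>2 + x\<^sup>2 \<le> (x - \<mu>)\<^sup>2"
    using assms mult_nonneg_nonpos[of x \<mu>] by (simp add: power2_eq_square algebra_simps)
  then have "- (x - \<mu>)\<^sup>2 / (2 * \<sigma>\<^sup>2) \<le> - \<mu>\<^sup>2 / (2 * \<sigma>\<^sup>2) + - (x - 0)\<^sup>2 / (2 * \<sigma>\<^sup>2)"
    using assms by (simp add: divide_simps)
  then have "exp (- (x - \<mu>)\<^sup>2 / (2 * \<sigma>\<^sup>2)) \<le> exp (- \<mu>\<^sup>2 / (2 * \<sigma>\<^sup>2)) * exp (- (x - 0)\<^sup>2 / (2 * \<sigma>\<^sup>2))"
    by (simp add: mult_exp_exp)
  then show ?thesis
    unfolding normal_density_def by (auto intro!: divide_right_mono)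
qed

lemma (in prob_space) prob_normal_nonneg_le:
  assumes D: "distributed M lborel D (normal_density \<mu> \<sigma>)" and "\<sigma> > 0" "\<mu> \<le> 0"
  shows "prob {\<omega>\<in>space M. 0 \<le> D \<omega>} \<le> exp (- \<mu>\<^sup>2 / (2 * \<sigma>\<^sup>2))"
proof -
  let ?c = "exp (- \<mu>\<^sup>2 / (2 * \<sigma>\<^sup>2))"
  have "emeasure M (D -` {0..} \<inter> space M) = (\<integral>\<^sup>+x. ennreal (normal_density \<mu> \<sigma> x) * indicator {0..} x \<partial>lborel)"
    by (rule distributed_emeasure[OF D]) simp
  also have "\<dots> \<le> (\<integral>\<^sup>+x. ?c * normal_density 0 \<sigma> x \<partial>lborel)"
    using normal_density_le_shift[OF assms(2,3)]
    by (intro nn_integral_mono) (auto simp: indicator_def ennreal_leI)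
  also have "\<dots> = ?c * (\<integral>\<^sup>+x. normal_density 0 \<sigma> x \<partial>lborel)"
    by (simp add: ennreal_mult nn_integral_cmult)
  also have "(\<integral>\<^sup>+x. normal_density 0 \<sigma> x \<partial>lborel) = 1"
    using \<open>\<sigma> > 0\<close> by (subst nn_integral_eq_integral) (auto simp: integrable_normal_density)
  finally have "emeasure M (D -` {0..} \<inter> space M) \<le> ?c" by simp
  moreover have "D -` {0..} \<inter> space M = {\<omega>\<in>space M. 0 \<le> D \<omega>}" by auto
  ultimately show ?thesis by (simp add: emeasure_eq_measure)
qed

lemma (in prob_space) AE_normal_neq:
  assumes D: "distributed M lborel D (normal_density \<mu> \<sigma>)"
  shows "AE \<omega> in M. D \<omega> \<noteq> c"
proof -
  have "AE x in density lborel (normal_density \<mu> \<sigma>). x \<noteq> c"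
    by (subst AE_density) (auto intro: eventually_mono[OF AE_lborel_singleton])
  then have "AE x in distr M lborel D. x \<noteq> c"
    unfolding distributed_distr_eq_density[OF D] .
  then show ?thesis
    by (rule AE_distrD[OF distributed_measurable[OF D]])
qed

lemma (in prob_space) normal_diff_of_means:
  fixes X :: "'i \<Rightarrow> 'a \<Rightarrow> real"
  assumes indep: "indep_vars (\<lambda>_. borel) X (J1 \<union> J2)" and disj: "J1 \<inter> J2 = {}"
    and J1: "finite J1" "J1 \<noteq> {}" and J2: "finite J2" "J2 \<noteq> {}"
    and \<sigma>: "\<sigma>1 > 0" "\<sigma>2 > 0"
    and X1: "\<And>j. j \<in> J1 \<Longrightarrow> distributed M lborel (X j) (normal_density \<mu>1 \<sigma>1)"
    and X2: "\<And>j. j \<in> J2 \<Longrightarrow> distributed M lborel (X j) (normal_density \<mu>2 \<sigma>2)"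
  shows "distributed M lborel (\<lambda>\<omega>. (\<Sum>j\<in>J1. X j \<omega>) / card J1 - (\<Sum>j\<in>J2. X j \<omega>) / card J2)
           (normal_density (\<mu>1 - \<mu>2) (sqrt (\<sigma>1\<^sup>2 / card J1 + \<sigma>2\<^sup>2 / card J2)))"
proof -
  define c where "c j = (if j \<in> J1 then 1 / card J1 else - 1 / card J2)" for j
  define \<mu> where "\<mu> j = (if j \<in> J1 then \<mu>1 else \<mu>2)" for j
  define \<sigma> where "\<sigma> j = (if j \<in> J1 then \<sigma>1 else \<sigma>2)" for j
  have c: "c j \<noteq> 0" for j using J1 J2 by (simp add: c_def)
  have \<sigma>_pos: "\<sigma> j > 0" for j using \<sigma> by (simp add: \<sigma>_def)
  have "distributed M lborel (\<lambda>\<omega>. c j * X j \<omega>) (normal_density (c j * \<mu> j) (\<bar>c j\<bar> * \<sigma> j))"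
    if "j \<in> J1 \<union> J2" for j
  proof -
    have "distributed M lborel (X j) (normal_density (\<mu> j) (\<sigma> j))"
      using that X1 X2 disj by (auto simp: \<mu>_def \<sigma>_def)
    from normal_density_affine[OF this \<sigma>_pos c, of 0] show ?thesis by simp
  qed
  moreover have "indep_vars (\<lambda>_. borel) (\<lambda>j \<omega>. c j * X j \<omega>) (J1 \<union> J2)"
    by (rule indep_vars_compose2[OF indep]) simp
  ultimately have "distributed M lborel (\<lambda>\<omega>. \<Sum>j\<in>J1 \<union> J2. c j * X j \<omega>)
      (normal_density (\<Sum>j\<in>J1 \<union> J2. c j * \<mu> j) (sqrt (\<Sum>j\<in>J1 \<union> J2. (\<bar>c j\<bar> * \<sigma> j)\<^sup>2)))"
    using J1 J2 c \<sigma>_pos by (intro sum_indep_normal) auto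
  moreover have "(\<Sum>j\<in>J1 \<union> J2. f j) = (\<Sum>j\<in>J1. f j) + (\<Sum>j\<in>J2. f j)" for f :: "'i \<Rightarrow> real"
    using J1 J2 disj by (simp add: sum.union_disjoint)
  moreover have "j \<notin> J1" if "j \<in> J2" for j using that disj by auto
  ultimately show ?thesis
    using J1 J2
    by (simp add: c_def \<mu>_def \<sigma>_def power2_eq_square sum_divide_distrib sum_negf
        cong: sum.cong)
qed

lemma (in prob_space) sum_prob_eq_expectation_card:
  assumes "finite J" "\<And>j. j \<in> J \<Longrightarrow> E j \<in> events"
  shows "(\<Sum>j\<in>J. prob (E j)) = expectation (\<lambda>\<omega>. real (card {j\<in>J. \<omega> \<in> E j}))"
    and "integrable M (\<lambda>\<omega>. real (card {j\<in>J. \<omega> \<in> E j}))"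
proof -
  have card: "real (card {j\<in>J. \<omega> \<in> E j}) = (\<Sum>j\<in>J. indicator (E j) \<omega>)" for \<omega>
    using assms(1) by (simp add: indicator_def sum.If_cases Int_def)
  have int: "integrable M (indicator (E j) :: 'a \<Rightarrow> real)" if "j \<in> J" for j
    using assms(2)[OF that] by (simp add: emeasure_eq_measure)
  show "(\<Sum>j\<in>J. prob (E j)) = expectation (\<lambda>\<omega>. real (card {j\<in>J. \<omega> \<in> E j}))"
    unfolding card using int assms(2) by (simp add: Bochner_Integration.integral_sum)
  show "integrable M (\<lambda>\<omega>. real (card {j\<in>J. \<omega> \<in> E j}))"
    unfolding card using int by simp
qed

lemma (in prob_space) prob_mul_le_sum_prob:
  assumes J: "finite J" "\<And>j. j \<in> J \<Longrightarrow> E j \<in> events" and F: "F \<in> events"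
    and many: "\<forall>\<omega>\<in>F. c \<le> card {j\<in>J. \<omega> \<in> E j}"
  shows "real c * prob F \<le> (\<Sum>j\<in>J. prob (E j))"
proof -
  have "real c * prob F = expectation (\<lambda>\<omega>. real c * indicator F \<omega>)"
    using F by simp
  also have "\<dots> \<le> expectation (\<lambda>\<omega>. real (card {j\<in>J. \<omega> \<in> E j}))"
    using many F sum_prob_eq_expectation_card(2)[of J E, OF J]
    by (intro integral_mono integrable_mult_right integrable_real_indicator)
      (auto simp: indicator_def emeasure_eq_measure)
  finally show ?thesis by (simp add: sum_prob_eq_expectation_card(1)[of J E, OF J])
qed

lemma (in prob_space) sum_prob_le_1:
  assumes J: "finite J" "\<And>j. j \<in> J \<Longrightarrow> E j \<in> events"
    and at_most_one: "AE \<omega> in M. card {j\<in>J. \<omega> \<in> E j} \<le> 1"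
  shows "(\<Sum>j\<in>J. prob (E j)) \<le> 1"
proof -
  have "expectation (\<lambda>\<omega>. real (card {j\<in>J. \<omega> \<in> E j})) \<le> expectation (\<lambda>\<omega>. 1)"
    using at_most_one sum_prob_eq_expectation_card(2)[of J E, OF J]
    by (intro integral_mono_AE) (auto elim: eventually_mono)
  then show ?thesis by (simp add: sum_prob_eq_expectation_card(1)[of J E, OF J] prob_space)
qed

lemma (in prob_space) events_restrict_pred:
  fixes X :: "'i \<Rightarrow> 'a \<Rightarrow> real"
  assumes X: "\<And>i. i \<in> L \<Longrightarrow> X i \<in> borel_measurable M"
    and P: "Measurable.pred (PiM L (\<lambda>_. borel)) P"
  shows "{\<omega>\<in>space M. P (restrict (\<lambda>i. X i \<omega>) L)} \<in> events"
proof -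
  have "Measurable.pred M (\<lambda>\<omega>. P (restrict (\<lambda>i. X i \<omega>) L))"
    by (rule measurable_compose[OF measurable_restrict P]) (rule X)
  then show ?thesis by (simp add: pred_def)
qed

lemma (in prob_space) prob_indep_restrict_preds:
  fixes X :: "'i \<Rightarrow> 'a \<Rightarrow> real"
  assumes indep: "indep_vars (\<lambda>_. borel) X I" and L: "L1 \<inter> L2 = {}" "L1 \<subseteq> I" "L2 \<subseteq> I"
    and P1: "Measurable.pred (PiM L1 (\<lambda>_. borel)) P1" and P2: "Measurable.pred (PiM L2 (\<lambda>_. borel)) P2"
  shows "prob {\<omega>\<in>space M. P1 (restrict (\<lambda>i. X i \<omega>) L1) \<and> P2 (restrict (\<lambda>i. X i \<omega>) L2)}
       = prob {\<omega>\<in>space M. P1 (restrict (\<lambda>i. X i \<omega>) L1)} * prob {\<omega>\<in>space M. P2 (restrict (\<lambda>i. X i \<omega>) L2)}"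
proof -
  let ?r = "\<lambda>L \<omega>. restrict (\<lambda>i. X i \<omega>) L"
  have sets: "{x\<in>space (PiM L1 (\<lambda>_. borel)). P1 x} \<in> sets (PiM L1 (\<lambda>_. borel))"
    "{x\<in>space (PiM L2 (\<lambda>_. borel)). P2 x} \<in> sets (PiM L2 (\<lambda>_. borel))"
    using P1 P2 by (simp_all add: pred_def)
  have space: "?r L \<omega> \<in> space (PiM L (\<lambda>_. borel :: real measure))" for L \<omega>
    unfolding space_PiM by simp
  note indep_varD[OF indep_var_restrict[OF indep L] sets]
  moreover have "(\<lambda>\<omega>. (?r L1 \<omega>, ?r L2 \<omega>)) -` ({x\<in>space (PiM L1 (\<lambda>_. borel)). P1 x} \<times> {x\<in>space (PiM L2 (\<lambda>_. borel)). P2 x}) \<inter> space M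
      = {\<omega>\<in>space M. P1 (?r L1 \<omega>) \<and> P2 (?r L2 \<omega>)}"
    using space by auto
  moreover have "?r L -` {x\<in>space (PiM L (\<lambda>_. borel)). P x} \<inter> space M = {\<omega>\<in>space M. P (?r L \<omega>)}" for L P
    using space by auto
  ultimately show ?thesis by simp
qed

section \<open>Halving steps\<close>

definition top_half :: "(nat \<Rightarrow> real) \<Rightarrow> nat set \<Rightarrow> nat set \<Rightarrow> bool" where
  "top_half f A B \<longleftrightarrow> B \<subseteq> A \<and> card B = (card A + 1) div 2 \<and> (\<forall>i\<in>B. \<forall>j\<in>A - B. f j \<le> f i)"

lemma halving_rule_top_half:
  "is_halving_rule sel \<Longrightarrow> finite A \<Longrightarrow> A \<noteq> {} \<Longrightarrow> top_half f A (sel A f)"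
  unfolding is_halving_rule_def top_half_def by blast

lemma top_half_unique:
  assumes top1: "top_half f A B1" and top2: "top_half f A B2" and "finite A" "inj_on f A"
  shows "B1 = B2"
proof -
  have "B1 \<subseteq> B2 \<or> B2 \<subseteq> B1"
  proof (rule ccontr)
    assume "\<not> ?thesis"
    then obtain i j where i: "i \<in> B1 - B2" and j: "j \<in> B2 - B1" by blast
    with top1 top2 have "f j \<le> f i" "f i \<le> f j" unfolding top_half_def by blast+
    with \<open>inj_on f A\<close> top1 top2 i j show False unfolding top_half_def by (auto dest: inj_onD)
  qed
  with assms show ?thesis unfolding top_half_def by (metis card_subset_eq finite_subset)
qed

lemma top_half_cong: "\<forall>i\<in>A. f i = g i \<Longrightarrow> top_half f A B = top_half g A B"
  unfolding top_half_def by (metis Diff_iff subsetD)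

lemma sh_set_subset_card:
  assumes halving: "is_halving_rule sel" and K: "K = 2 ^ m" and "k \<le> m"
  shows "sh_set ch sel K ns y k \<subseteq> {1..K} \<and> card (sh_set ch sel K ns y k) = 2 ^ (m - k)"
  using \<open>k \<le> m\<close>
proof (induction k)
  case (Suc k)
  let ?A = "sh_set ch sel K ns y k"
  have A: "?A \<subseteq> {1..K}" "card ?A = 2 ^ (m - k)" using Suc by auto
  then have "finite ?A" "?A \<noteq> {}" by (auto intro: finite_subset)
  then have "top_half (muhat ch ns y (Suc k) ?A) ?A (sh_set ch sel K ns y (Suc k))"
    using halving_rule_top_half[OF halving] by simp
  moreover have "m - k = Suc (m - Suc k)" using Suc.prems by simp
  ultimately show ?case using A by (auto simp: top_half_def)
qed (simp add: K)

text \<open>Unlike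
  \<open>sh_set\<close>, this does not involve the selection rule, which need not be measurable.\<close>

primrec reachable :: "(nat set \<Rightarrow> (nat \<Rightarrow> nat) \<Rightarrow> nat) \<Rightarrow> (nat \<Rightarrow> real) \<Rightarrow> nat \<Rightarrow> nat
    \<Rightarrow> (nat \<Rightarrow> nat \<Rightarrow> nat \<Rightarrow> real) \<Rightarrow> nat \<Rightarrow> nat set \<Rightarrow> bool" where
  "reachable ch v K ns y 0 B \<longleftrightarrow> B = {1..K}"
| "reachable ch v K ns y (Suc k) B \<longleftrightarrow>
     (\<exists>A\<in>Pow {1..K}. reachable ch v K ns y k A \<and> integral_allocation v ns A \<and>
        top_half (muhat ch ns y (Suc k) A) A B)"

lemma sh_set_reachable:
  assumes halving: "is_halving_rule sel" and K: "K = 2 ^ m" and "k \<le> m"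
    and int: "\<forall>s\<in>{1..k}. integral_allocation v ns (sh_set ch sel K ns y (s - 1))"
  shows "reachable ch v K ns y k (sh_set ch sel K ns y k)"
  using \<open>k \<le> m\<close> int
proof (induction k)
  case (Suc k)
  let ?A = "sh_set ch sel K ns y k"
  have A: "?A \<subseteq> {1..K}" "card ?A = 2 ^ (m - k)"
    using sh_set_subset_card[OF halving K] Suc.prems(1) by auto
  then have "finite ?A" "?A \<noteq> {}" by (auto intro: finite_subset)
  then have "top_half (muhat ch ns y (Suc k) ?A) ?A (sh_set ch sel K ns y (Suc k))"
    using halving_rule_top_half[OF halving] by simp
  moreover have "integral_allocation v ns ?A" using Suc.prems(2) by force
  moreover have "reachable ch v K ns y k ?A" using Suc by simp
  ultimately show ?case using A by auto
qed simp

lemma muhat_cong: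
  "\<forall>t\<in>{1..ns}. y s t i = y' s t i \<Longrightarrow> muhat ch ns y s A i = muhat ch ns y' s A i"
  unfolding muhat_def by (intro arg_cong2[where f = "(/)"] sum.cong) auto

definition beaten_by_half :: "(nat set \<Rightarrow> (nat \<Rightarrow> nat) \<Rightarrow> nat) \<Rightarrow> nat
    \<Rightarrow> (nat \<Rightarrow> nat \<Rightarrow> nat \<Rightarrow> real) \<Rightarrow> nat \<Rightarrow> nat set \<Rightarrow> bool" where
  "beaten_by_half ch ns y s A \<longleftrightarrow> (\<exists>W\<in>Pow (A - {1}). (card A + 1) div 2 \<le> card W \<and>
     (\<forall>j\<in>W. muhat ch ns y s A 1 \<le> muhat ch ns y s A j))"

lemma beaten_by_half_cong:
  assumes "\<forall>i\<in>insert 1 A. \<forall>t\<in>{1..ns}. y s t i = y' s t i"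
  shows "beaten_by_half ch ns y s A = beaten_by_half ch ns y' s A"
proof -
  have eq: "muhat ch ns y s A i = muhat ch ns y' s A i" if "i \<in> insert 1 A" for i
    using assms that by (intro muhat_cong) auto
  show ?thesis unfolding beaten_by_half_def
  proof (intro bex_cong conj_cong refl ball_cong arg_cong2[where f = "(\<le>)"])
    fix W j assume "W \<in> Pow (A - {1})" "j \<in> W"
    then show "muhat ch ns y s A 1 = muhat ch ns y' s A 1" "muhat ch ns y s A j = muhat ch ns y' s A j"
      using eq by auto
  qed
qed

lemma reachable_cong:
  assumes "\<forall>s\<in>{1..k}. \<forall>t\<in>{1..ns}. \<forall>i\<in>{1..K}. y s t i = y' s t i"
  shows "reachable ch v K ns y k B = reachable ch v K ns y' k B"
  using assms
proof (induction k arbitrary: B)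
  case (Suc k)
  have "top_half (muhat ch ns y (Suc k) A) A B = top_half (muhat ch ns y' (Suc k) A) A B"
    if "A \<subseteq> {1..K}" for A
    using Suc.prems that by (intro top_half_cong ballI muhat_cong) auto
  with Suc show ?case by auto
qed simp

definition distinct_means :: "(nat set \<Rightarrow> (nat \<Rightarrow> nat) \<Rightarrow> nat) \<Rightarrow> (nat \<Rightarrow> real) \<Rightarrow> nat \<Rightarrow> nat
    \<Rightarrow> (nat \<Rightarrow> nat \<Rightarrow> nat \<Rightarrow> real) \<Rightarrow> nat \<Rightarrow> bool" where
  "distinct_means ch v K ns y k \<longleftrightarrow>
     (\<forall>s\<in>{1..k}. \<forall>A\<in>Pow {1..K}. integral_allocation v ns A \<longrightarrow> inj_on (muhat ch ns y s A) A)"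

lemma reachable_unique:
  assumes "distinct_means ch v K ns y k" "reachable ch v K ns y k B1" "reachable ch v K ns y k B2"
  shows "B1 = B2"
  using assms
proof (induction k arbitrary: B1 B2)
  case (Suc k)
  obtain A1 A2 where A: "A1 \<subseteq> {1..K}" "A2 \<subseteq> {1..K}"
    and "reachable ch v K ns y k A1" "reachable ch v K ns y k A2" and int: "integral_allocation v ns A1"
    and top: "top_half (muhat ch ns y (Suc k) A1) A1 B1" "top_half (muhat ch ns y (Suc k) A2) A2 B2"
    using Suc.prems(2,3) by auto
  moreover have "distinct_means ch v K ns y k" using Suc.prems(1) by (simp add: distinct_means_def)
  ultimately have "A1 = A2" using Suc.IH by blast
  moreover have "inj_on (muhat ch ns y (Suc k) A1) A1"
    using Suc.prems(1) A int unfolding distinct_means_def by auto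
  moreover have "finite A1" using A(1) by (rule finite_subset) simp
  ultimately show ?case using top top_half_unique by metis
qed simp

lemma measurable_PiM_borel_component [measurable]:
  "(\<lambda>x. x i) \<in> borel_measurable (PiM L (\<lambda>_. borel :: real measure))"
proof (cases "i \<in> L")
  case False
  then have "x i = undefined" if "x \<in> space (PiM L (\<lambda>_. borel :: real measure))" for x
    using PiE_arb[OF _ False] that unfolding space_PiM by blast
  then show ?thesis by (subst measurable_cong[where g = "\<lambda>_. undefined"]) auto
qed (rule measurable_component_singleton)

lemma measurable_muhat [measurable]:
  "(\<lambda>x. muhat ch ns (\<lambda>r t i. x (r, t, i)) s A i) \<in> borel_measurable (PiM L (\<lambda>_. borel))"
  unfolding muhat_def by measurable

lemma pred_muhat_le:
  "Measurable.pred (PiM L (\<lambda>_. borel))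
     (\<lambda>x. muhat ch ns (\<lambda>r t i. x (r, t, i)) s A j \<le> muhat ch ns (\<lambda>r t i. x (r, t, i)) s A i)"
  unfolding pred_def by (intro borel_measurable_le measurable_muhat)

lemma pred_beaten_by_half:
  "finite A \<Longrightarrow> Measurable.pred (PiM L (\<lambda>_. borel)) (\<lambda>x. beaten_by_half ch ns (\<lambda>r t i. x (r, t, i)) s A)"
  unfolding beaten_by_half_def
  by (intro pred_intros_finite(4) pred_intros_logic(3) pred_intros_countable_bounded(3)
      pred_muhat_le measurable_const) auto

lemma pred_reachable:
  "Measurable.pred (PiM L (\<lambda>_. borel)) (\<lambda>x. reachable ch v K ns (\<lambda>r t i. x (r, t, i)) k B)"
proof (induction k arbitrary: B)
  case (Suc k)
  show ?case unfolding reachable.simps top_half_def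
    by (intro pred_intros_finite(4) pred_intros_logic(3) pred_intros_countable_bounded(3) Suc.IH
        pred_muhat_le measurable_const) auto
qed simp

section \<open>Error probability of SHVar\<close>

lemma decreasing_steps_le_first:
  fixes f :: "nat \<Rightarrow> 'b::preorder"
  assumes "\<forall>i\<in>{a..<b}. f (i + 1) \<le> f i" "a \<le> j" "j \<le> b"
  shows "f j \<le> f a"
  using assms(2,3)
proof (induction j rule: dec_induct)
  case (step i)
  then have "f (Suc i) \<le> f i" using assms(1) by simp
  with step show ?case by (meson Suc_leD order_trans)
qed simp

locale sh_var_bandit = prob_space M for M :: "'a measure" +
  fixes Y :: "nat \<Rightarrow> nat \<Rightarrow> nat \<Rightarrow> 'a \<Rightarrow> real"
    and \<mu> \<sigma> :: "nat \<Rightarrow> real"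
    and K m ns :: nat
    and ch :: "nat set \<Rightarrow> (nat \<Rightarrow> nat) \<Rightarrow> nat"
    and sel :: "nat set \<Rightarrow> (nat \<Rightarrow> real) \<Rightarrow> nat set"
  assumes K: "K = 2 ^ m" and ns_pos: "ns > 0"
    and \<sigma>_pos: "\<forall>i\<in>{1..K}. \<sigma> i > 0"
    and gap: "\<mu> 1 > \<mu> 2"
    and sorted: "\<forall>i\<in>{2..<K}. \<mu> i \<ge> \<mu> (i + 1)"
    and indep: "indep_vars (\<lambda>_. borel) (\<lambda>(s, t, i). Y s t i) ({1..m} \<times> {1..ns} \<times> {1..K})"
    and gauss: "\<forall>s\<in>{1..m}. \<forall>t\<in>{1..ns}. \<forall>i\<in>{1..K}.
                  distributed M lborel (Y s t i) (normal_density (\<mu> i) (\<sigma> i))"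
    and rule: "is_var_rule (\<lambda>i. (\<sigma> i)\<^sup>2) ch"
    and halving: "is_halving_rule sel"
    and integral_alloc: "\<forall>\<omega>\<in>space M. \<forall>s\<in>{1..m}.
           integral_allocation (\<lambda>i. (\<sigma> i)\<^sup>2) ns (sh_set ch sel K ns (\<lambda>s t i. Y s t i \<omega>) (s - 1))"
begin

abbreviation "v \<equiv> \<lambda>i. (\<sigma> i)\<^sup>2"
abbreviation "rewards \<omega> \<equiv> \<lambda>s t i. Y s t i \<omega>"
abbreviation "mean \<omega> s A i \<equiv> muhat ch ns (rewards \<omega>) s A i"
abbreviation "tail_bound \<equiv> exp (- (real ns * (\<mu> 1 - \<mu> 2)\<^sup>2) / (4 * (\<Sum>j\<in>{1..K}. (\<sigma> j)\<^sup>2)))"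

lemma one_le_K: "1 \<le> K"
  using K by simp

lemma var_pos: "i \<in> {1..K} \<Longrightarrow> (\<sigma> i)\<^sup>2 > 0"
  using \<sigma>_pos by (metis zero_less_power2 less_irrefl)

lemma mu_le_second: "j \<in> {1..K} \<Longrightarrow> j \<noteq> 1 \<Longrightarrow> \<mu> j \<le> \<mu> 2"
  using sorted by (rule decreasing_steps_le_first) auto

lemma mean_diff_normal:
  assumes s: "s \<in> {1..m}" and A: "A \<subseteq> {1..K}" "integral_allocation v ns A"
    and ij: "i \<in> A" "j \<in> A" "i \<noteq> j"
  shows "distributed M lborel (\<lambda>\<omega>. mean \<omega> s A i - mean \<omega> s A j)
           (normal_density (\<mu> i - \<mu> j) (sqrt (2 * (\<Sum>k\<in>A. (\<sigma> k)\<^sup>2) / ns)))"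
proof -
  define S where "S = (\<Sum>k\<in>A. (\<sigma> k)\<^sup>2)"
  define T where "T k = {t\<in>{1..ns}. pull ch A t = k}" for k
  define J where "J k = (\<lambda>t. (s, t, k)) ` T k" for k
  have finA: "finite A" using A(1) by (rule finite_subset) simp
  have pos: "\<forall>k\<in>A. v k > 0" using A(1) var_pos by blast
  have S: "S > 0" unfolding S_def using ij finA pos by (intro sum_pos) auto
  have "A \<noteq> {}" using ij by auto
  from card_pulls_eq_allocation[OF rule finA this pos A(2)]
  have card_T: "real (card (T k)) = (\<sigma> k)\<^sup>2 * ns / S" if "k \<in> A" for k
    using that unfolding T_def allocation_def S_def by blast
  have J: "finite (J k)" "J k \<noteq> {}" "real (card (J k)) = (\<sigma> k)\<^sup>2 * ns / S"
    "J k \<subseteq> {1..m} \<times> {1..ns} \<times> {1..K}" if "k \<in> A" for k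
  proof -
    have "inj_on (\<lambda>t. (s, t, k)) (T k)" by (auto intro: inj_onI)
    then have "card (J k) = card (T k)" unfolding J_def by (rule card_image)
    moreover have "(\<sigma> k)\<^sup>2 * ns / S > 0" using that pos S ns_pos by simp
    moreover show "finite (J k)" by (simp add: J_def T_def)
    ultimately show "J k \<noteq> {}" "real (card (J k)) = (\<sigma> k)\<^sup>2 * ns / S"
      using card_T[OF that] by auto
    show "J k \<subseteq> {1..m} \<times> {1..ns} \<times> {1..K}" using that s A(1) by (auto simp: J_def T_def)
  qed
  have mean: "mean \<omega> s A k = (\<Sum>idx\<in>J k. (\<lambda>(s, t, i). Y s t i \<omega>) idx) / card (J k)" if "k \<in> A" for k \<omega>
  proof -
    have "inj_on (\<lambda>t. (s, t, k)) (T k)" by (auto intro: inj_onI)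
    then show ?thesis
      unfolding J_def by (simp add: sum.reindex card_image muhat_def T_def)
  qed
  have Y_normal: "distributed M lborel ((\<lambda>(s, t, i). Y s t i) idx) (normal_density (\<mu> k) (\<sigma> k))"
    if "k \<in> A" "idx \<in> J k" for k idx
    using that s A(1) gauss by (force simp: J_def T_def)
  let ?D = "\<lambda>\<omega>. (\<Sum>idx\<in>J i. (\<lambda>(s, t, i). Y s t i) idx \<omega>) / card (J i)
                  - (\<Sum>idx\<in>J j. (\<lambda>(s, t, i). Y s t i) idx \<omega>) / card (J j)"
  have "distributed M lborel ?D
      (normal_density (\<mu> i - \<mu> j) (sqrt ((\<sigma> i)\<^sup>2 / card (J i) + (\<sigma> j)\<^sup>2 / card (J j))))"
  proof (rule normal_diff_of_means)
    show "indep_vars (\<lambda>_. borel) (\<lambda>(s, t, i). Y s t i) (J i \<union> J j)"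
      using J ij by (intro indep_vars_subset[OF indep]) auto
    show "J i \<inter> J j = {}" using ij by (auto simp: J_def)
  qed (use J ij \<sigma>_pos A(1) Y_normal in auto)
  moreover have "(\<sigma> k)\<^sup>2 / card (J k) = S / ns" if "k \<in> A" for k
    using J[OF that] pos that S ns_pos by (simp add: field_simps)
  moreover have "(\<lambda>\<omega>. mean \<omega> s A i - mean \<omega> s A j) = ?D"
    using ij by (simp add: mean split_beta')
  ultimately show ?thesis using ij unfolding S_def by simp
qed

lemma prob_best_mean_le:
  assumes s: "s \<in> {1..m}" and A: "A \<subseteq> {1..K}" "integral_allocation v ns A"
    and "1 \<in> A" "j \<in> A" "j \<noteq> 1"
  shows "prob {\<omega>\<in>space M. mean \<omega> s A 1 \<le> mean \<omega> s A j} \<le> tail_bound"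
proof -
  define S where "S = (\<Sum>k\<in>A. (\<sigma> k)\<^sup>2)"
  have "finite A" using A(1) by (rule finite_subset) simp
  then have S: "0 < S" "S \<le> (\<Sum>k\<in>{1..K}. (\<sigma> k)\<^sup>2)"
    using A(1) \<open>1 \<in> A\<close> unfolding S_def by (auto intro!: sum_pos sum_mono2 var_pos)
  have "\<mu> j \<le> \<mu> 2" using mu_le_second A(1) assms(5,6) by auto
  then have "0 \<le> \<mu> 1 - \<mu> 2" "\<mu> 1 - \<mu> 2 \<le> \<mu> 1 - \<mu> j" using gap by auto
  then have \<Delta>: "(\<mu> 1 - \<mu> 2)\<^sup>2 \<le> (\<mu> j - \<mu> 1)\<^sup>2"
    by (subst power2_commute) (rule power_mono)
  have "distributed M lborel (\<lambda>\<omega>. mean \<omega> s A j - mean \<omega> s A 1)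
      (normal_density (\<mu> j - \<mu> 1) (sqrt (2 * S / ns)))"
    unfolding S_def by (rule mean_diff_normal[OF s A assms(5,4,6)])
  then have "prob {\<omega>\<in>space M. 0 \<le> mean \<omega> s A j - mean \<omega> s A 1}
      \<le> exp (- (\<mu> j - \<mu> 1)\<^sup>2 / (2 * (sqrt (2 * S / ns))\<^sup>2))"
    by (rule prob_normal_nonneg_le) (use S ns_pos \<open>\<mu> j \<le> \<mu> 2\<close> gap in auto)
  also have "\<dots> = exp (- (ns * (\<mu> j - \<mu> 1)\<^sup>2) / (4 * S))"
    using S ns_pos by simp
  also have "\<dots> \<le> tail_bound"
  proof -
    have "ns * (\<mu> 1 - \<mu> 2)\<^sup>2 / (4 * (\<Sum>k\<in>{1..K}. (\<sigma> k)\<^sup>2)) \<le> ns * (\<mu> j - \<mu> 1)\<^sup>2 / (4 * S)"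
      using S \<Delta> by (intro frac_le mult_left_mono) auto
    then show ?thesis by simp
  qed
  finally show ?thesis by simp
qed

lemma AE_distinct_means: "AE \<omega> in M. distinct_means ch v K ns (rewards \<omega>) m"
proof -
  have "AE \<omega> in M. \<forall>s\<in>{1..m}. \<forall>A\<in>{A\<in>Pow {1..K}. integral_allocation v ns A}.
          \<forall>i\<in>A. \<forall>j\<in>A. i \<noteq> j \<longrightarrow> mean \<omega> s A i - mean \<omega> s A j \<noteq> 0"
  proof (intro AE_finite_allI)
    fix s A i j assume "s \<in> {1..m}" "A \<in> {A\<in>Pow {1..K}. integral_allocation v ns A}" "i \<in> A" "j \<in> A"
    then show "AE \<omega> in M. i \<noteq> j \<longrightarrow> mean \<omega> s A i - mean \<omega> s A j \<noteq> 0"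
      using AE_normal_neq[OF mean_diff_normal[of s A i j], of 0] by (cases "i = j") auto
  qed (auto intro: finite_subset)
  then show ?thesis
    by (rule eventually_mono) (auto simp: distinct_means_def inj_on_def)
qed

abbreviation "X \<equiv> \<lambda>(s, t, i). Y s t i"
abbreviation "coords S \<equiv> S \<times> {1..ns} \<times> {1..K}"
abbreviation "observed S \<omega> \<equiv> restrict (\<lambda>idx. X idx \<omega>) (coords S)"

lemma X_measurable: "idx \<in> coords {1..m} \<Longrightarrow> X idx \<in> borel_measurable M"
  using indep unfolding indep_vars_def by blast

definition reached :: "nat \<Rightarrow> nat set \<Rightarrow> 'a set" where
  "reached k A = {\<omega>\<in>space M. reachable ch v K ns (rewards \<omega>) k A}"

definition beaten :: "nat \<Rightarrow> nat set \<Rightarrow> 'a set" where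
  "beaten s A = {\<omega>\<in>space M. beaten_by_half ch ns (rewards \<omega>) s A}"

lemma reached_observed:
  "reached k A = {\<omega>\<in>space M. reachable ch v K ns (\<lambda>r t i. observed {1..k} \<omega> (r, t, i)) k A}"
  unfolding reached_def by (intro Collect_cong conj_cong refl reachable_cong) auto

lemma beaten_observed:
  "A \<subseteq> {1..K} \<Longrightarrow>
    beaten s A = {\<omega>\<in>space M. beaten_by_half ch ns (\<lambda>r t i. observed {s} \<omega> (r, t, i)) s A}"
  unfolding beaten_def using one_le_K
  by (intro Collect_cong conj_cong refl beaten_by_half_cong) auto

lemma reached_events: "k \<le> m \<Longrightarrow> reached k A \<in> events"
  unfolding reached_observed using X_measurable
  by (intro events_restrict_pred[OF _ pred_reachable]) auto

lemma beaten_events: "s \<in> {1..m} \<Longrightarrow> A \<subseteq> {1..K} \<Longrightarrow> beaten s A \<in> events"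
  unfolding beaten_observed using X_measurable
  by (intro events_restrict_pred[OF _ pred_beaten_by_half]) (auto intro: finite_subset)

lemma prob_reached_beaten:
  assumes "s \<in> {1..m}" "A \<subseteq> {1..K}"
  shows "prob (reached (s - 1) A \<inter> beaten s A) = prob (reached (s - 1) A) * prob (beaten s A)"
proof -
  define P1 where "P1 x \<longleftrightarrow> reachable ch v K ns (\<lambda>r t i. x (r, t, i)) (s - 1) A"
    for x :: "nat \<times> nat \<times> nat \<Rightarrow> real"
  define P2 where "P2 x \<longleftrightarrow> beaten_by_half ch ns (\<lambda>r t i. x (r, t, i)) s A"
    for x :: "nat \<times> nat \<times> nat \<Rightarrow> real"
  have R: "reached (s - 1) A = {\<omega>\<in>space M. P1 (observed {1..s - 1} \<omega>)}"
    unfolding P1_def by (rule reached_observed)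
  have B: "beaten s A = {\<omega>\<in>space M. P2 (observed {s} \<omega>)}"
    unfolding P2_def by (rule beaten_observed[OF assms(2)])
  have "finite A" using assms(2) by (rule finite_subset) simp
  then have "Measurable.pred (PiM L (\<lambda>_. borel)) P1" "Measurable.pred (PiM L (\<lambda>_. borel)) P2" for L
    unfolding P1_def P2_def by (simp_all only: pred_reachable pred_beaten_by_half)
  then have "prob {\<omega>\<in>space M. P1 (observed {1..s - 1} \<omega>) \<and> P2 (observed {s} \<omega>)}
      = prob (reached (s - 1) A) * prob (beaten s A)"
    unfolding R B using assms(1) by (intro prob_indep_restrict_preds[OF indep]) auto
  moreover have "reached (s - 1) A \<inter> beaten s A
      = {\<omega>\<in>space M. P1 (observed {1..s - 1} \<omega>) \<and> P2 (observed {s} \<omega>)}"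
    unfolding R B by blast
  ultimately show ?thesis by simp
qed

lemma prob_beaten_le:
  assumes s: "s \<in> {1..m}" and A: "A \<subseteq> {1..K}" "integral_allocation v ns A" and "1 \<in> A"
  shows "prob (beaten s A) \<le> 2 * tail_bound"
proof -
  define c where "c = (card A + 1) div 2"
  define E where "E j = {\<omega>\<in>space M. mean \<omega> s A 1 \<le> mean \<omega> s A j}" for j
  have finA: "finite A" using A(1) by (rule finite_subset) simp
  have E: "E j \<in> events" if "j \<in> A - {1}" for j
  proof -
    have D: "distributed M lborel (\<lambda>\<omega>. mean \<omega> s A j - mean \<omega> s A 1)
        (normal_density (\<mu> j - \<mu> 1) (sqrt (2 * (\<Sum>k\<in>A. (\<sigma> k)\<^sup>2) / ns)))"
      using that \<open>1 \<in> A\<close> by (intro mean_diff_normal[OF s A]) auto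
    have "(\<lambda>\<omega>. mean \<omega> s A j - mean \<omega> s A 1) \<in> borel_measurable M"
      using distributed_measurable[OF D] by simp
    then have "{\<omega>\<in>space M. 0 \<le> mean \<omega> s A j - mean \<omega> s A 1} \<in> events" by measurable
    then show ?thesis by (simp add: E_def)
  qed
  have "\<forall>\<omega>\<in>beaten s A. c \<le> card {j\<in>A - {1}. \<omega> \<in> E j}"
  proof
    fix \<omega> assume "\<omega> \<in> beaten s A"
    then obtain W where W: "W \<subseteq> A - {1}" "c \<le> card W" "\<forall>j\<in>W. \<omega> \<in> E j"
      unfolding beaten_def beaten_by_half_def E_def c_def by auto
    then have "card W \<le> card {j\<in>A - {1}. \<omega> \<in> E j}" using finA by (intro card_mono) auto
    with W show "c \<le> card {j\<in>A - {1}. \<omega> \<in> E j}" by simp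
  qed
  then have "real c * prob (beaten s A) \<le> (\<Sum>j\<in>A - {1}. prob (E j))"
    using finA E beaten_events[OF s A(1)] by (intro prob_mul_le_sum_prob) auto
  also have "\<dots> \<le> (\<Sum>j\<in>A - {1}. tail_bound)"
    using prob_best_mean_le[OF s A \<open>1 \<in> A\<close>] by (intro sum_mono) (auto simp: E_def)
  also have "\<dots> \<le> real c * (2 * tail_bound)"
    using finA \<open>1 \<in> A\<close> by (simp add: c_def card_Diff_singleton of_nat_diff)
  finally have "real c * prob (beaten s A) \<le> real c * (2 * tail_bound)" .
  moreover have "0 < card A" using finA \<open>1 \<in> A\<close> card_gt_0_iff by blast
  then have "0 < c" unfolding c_def by presburger
  ultimately show ?thesis by simp
qed

lemma sum_prob_reached_le_1:
  assumes "k \<le> m" "\<A> \<subseteq> Pow {1..K}"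
  shows "(\<Sum>A\<in>\<A>. prob (reached k A)) \<le> 1"
proof (rule sum_prob_le_1)
  show "finite \<A>" using assms(2) by (rule finite_subset) simp
  show "reached k A \<in> events" for A using assms(1) by (rule reached_events)
  show "AE \<omega> in M. card {A\<in>\<A>. \<omega> \<in> reached k A} \<le> 1"
    using AE_distinct_means
  proof (rule eventually_mono)
    fix \<omega> assume "distinct_means ch v K ns (rewards \<omega>) m"
    then have distinct: "distinct_means ch v K ns (rewards \<omega>) k"
      using assms(1) by (auto simp: distinct_means_def)
    have "\<forall>A1\<in>{A\<in>\<A>. \<omega> \<in> reached k A}. \<forall>A2\<in>{A\<in>\<A>. \<omega> \<in> reached k A}. A1 = A2"
    proof (intro ballI)
      fix A1 A2 assume "A1 \<in> {A\<in>\<A>. \<omega> \<in> reached k A}" "A2 \<in> {A\<in>\<A>. \<omega> \<in> reached k A}"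
      then have "reachable ch v K ns (rewards \<omega>) k A1" "reachable ch v K ns (rewards \<omega>) k A2"
        by (simp_all add: reached_def)
      then show "A1 = A2" by (rule reachable_unique[OF distinct])
    qed
    moreover have "finite {A\<in>\<A>. \<omega> \<in> reached k A}" using \<open>finite \<A>\<close> by simp
    ultimately show "card {A\<in>\<A>. \<omega> \<in> reached k A} \<le> 1"
      by (simp add: card_le_Suc0_iff_eq)
  qed
qed

lemma error_subset:
  "{\<omega>\<in>space M. sh_out ch sel K m ns (rewards \<omega>) \<noteq> 1}
     \<subseteq> (\<Union>s\<in>{1..m}. \<Union>A\<in>{A\<in>Pow {1..K}. integral_allocation v ns A \<and> 1 \<in> A}.
           reached (s - 1) A \<inter> beaten s A)"
proof
  fix \<omega> assume "\<omega> \<in> {\<omega>\<in>space M. sh_out ch sel K m ns (rewards \<omega>) \<noteq> 1}"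
  then have \<omega>: "\<omega> \<in> space M" and out: "sh_out ch sel K m ns (rewards \<omega>) \<noteq> 1" by auto
  define A where "A k = sh_set ch sel K ns (rewards \<omega>) k" for k
  have A: "A k \<subseteq> {1..K}" "card (A k) = 2 ^ (m - k)" if "k \<le> m" for k
    using sh_set_subset_card[OF halving K that] unfolding A_def by auto
  then obtain x where "A m = {x}" using card_1_singleton_iff[of "A m"] by auto
  with out have "1 \<notin> A m" by (simp add: sh_out_def A_def)
  moreover have "1 \<in> A 0" using one_le_K by (simp add: A_def)
  ultimately obtain k where k: "k < m" "1 \<in> A k" "1 \<notin> A (Suc k)"
    using ex_least_nat_less[of "\<lambda>k. 1 \<notin> A k" m] by blast
  have int: "integral_allocation v ns (A (s - 1))" if "s \<in> {1..Suc k}" for s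
    using integral_alloc \<omega> that k(1) by (auto simp: A_def)
  have reached: "\<omega> \<in> reached k (A k)"
    using sh_set_reachable[OF halving K, of k] int \<omega> k(1) by (simp add: reached_def A_def)
  have "finite (A k)" "A k \<noteq> {}"
    using A[of k] k(1) by (auto intro: finite_subset)
  then have "top_half (mean \<omega> (Suc k) (A k)) (A k) (A (Suc k))"
    using halving_rule_top_half[OF halving] by (simp add: A_def)
  then have beaten: "\<omega> \<in> beaten (Suc k) (A k)"
    using \<omega> k unfolding beaten_def beaten_by_half_def top_half_def
    by (intro CollectI conjI bexI[of _ "A (Suc k)"]) auto
  from reached beaten show "\<omega> \<in> (\<Union>s\<in>{1..m}. \<Union>A\<in>{A\<in>Pow {1..K}. integral_allocation v ns A \<and> 1 \<in> A}.
                          reached (s - 1) A \<inter> beaten s A)"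
    using A[of k] k int[of "Suc k"] by (intro UN_I[of "Suc k"]) auto
qed

lemma prob_error_le:
  "prob {\<omega>\<in>space M. sh_out ch sel K m ns (rewards \<omega>) \<noteq> 1} \<le> 2 * m * tail_bound"
proof -
  define \<A> where "\<A> = {A\<in>Pow {1..K}. integral_allocation v ns A \<and> 1 \<in> A}"
  have fin: "finite \<A>" unfolding \<A>_def by simp
  have ev: "reached (s - 1) A \<inter> beaten s A \<in> events" if "s \<in> {1..m}" "A \<in> \<A>" for s A
    using that reached_events[of "s - 1" A] beaten_events[of s A] by (auto simp: \<A>_def)
  have U: "(\<Union>s\<in>{1..m}. \<Union>A\<in>\<A>. reached (s - 1) A \<inter> beaten s A) \<in> events"
    using ev fin by (intro sets.finite_UN) auto
  have "prob {\<omega>\<in>space M. sh_out ch sel K m ns (rewards \<omega>) \<noteq> 1}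
      \<le> prob (\<Union>s\<in>{1..m}. \<Union>A\<in>\<A>. reached (s - 1) A \<inter> beaten s A)"
    using error_subset U unfolding \<A>_def[symmetric] by (rule finite_measure_mono)
  also have "\<dots> \<le> (\<Sum>s\<in>{1..m}. \<Sum>A\<in>\<A>. prob (reached (s - 1) A \<inter> beaten s A))"
    using ev fin
    by (intro order.trans[OF finite_measure_subadditive_finite] sum_mono finite_measure_subadditive_finite)
      auto
  also have "\<dots> \<le> (\<Sum>s\<in>{1..m}. 2 * tail_bound)"
  proof (rule sum_mono)
    fix s assume s: "s \<in> {1..m}"
    have "(\<Sum>A\<in>\<A>. prob (reached (s - 1) A \<inter> beaten s A))
        \<le> (\<Sum>A\<in>\<A>. prob (reached (s - 1) A) * (2 * tail_bound))"
      using s prob_reached_beaten prob_beaten_le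
      by (intro sum_mono) (auto simp: \<A>_def intro!: mult_left_mono)
    also have "\<dots> \<le> 1 * (2 * tail_bound)"
      unfolding sum_distrib_right[symmetric] using s
      by (intro mult_right_mono sum_prob_reached_le_1) (auto simp: \<A>_def)
    finally show "(\<Sum>A\<in>\<A>. prob (reached (s - 1) A \<inter> beaten s A)) \<le> 2 * tail_bound" by simp
  qed
  finally show ?thesis by simp
qed

end

theorem theorem1:
  fixes M :: "'a measure"
    and Y :: "nat \<Rightarrow> nat \<Rightarrow> nat \<Rightarrow> 'a \<Rightarrow> real"
    and \<mu> \<sigma> :: "nat \<Rightarrow> real"
    and K m ns n :: nat
    and ch :: "nat set \<Rightarrow> (nat \<Rightarrow> nat) \<Rightarrow> nat"
    and sel :: "nat set \<Rightarrow> (nat \<Rightarrow> real) \<Rightarrow> nat set"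
  assumes "prob_space M"
    and K: "K = 2 ^ m" and m: "m \<ge> 1"
    and n: "n = m * ns"
    and sig: "\<forall>i\<in>{1..K}. \<sigma> i > 0"
    and gap: "\<mu> 1 > \<mu> 2"
    and sorted: "\<forall>i\<in>{2..<K}. \<mu> i \<ge> \<mu> (i + 1)"
    and indep: "prob_space.indep_vars M (\<lambda>_. borel) (\<lambda>(s, t, i). Y s t i)
                  ({1..m} \<times> {1..ns} \<times> {1..K})"
    and gauss: "\<forall>s\<in>{1..m}. \<forall>t\<in>{1..ns}. \<forall>i\<in>{1..K}.
                  distributed M lborel (Y s t i) (normal_density (\<mu> i) (\<sigma> i))"
    and rule: "is_var_rule (\<lambda>i. (\<sigma> i)\<^sup>2) ch"
    and halving: "is_halving_rule sel"
    and integral_alloc: "\<forall>\<omega>\<in>space M. \<forall>s\<in>{1..m}.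
           let A = sh_set ch sel K ns (\<lambda>s t i. Y s t i \<omega>) (s - 1) in
           \<forall>i\<in>A. (\<sigma> i)\<^sup>2 * real ns / (\<Sum>j\<in>A. (\<sigma> j)\<^sup>2) \<in> \<int>"
  shows "measure M {\<omega>\<in>space M. sh_out ch sel K m ns (\<lambda>s t i. Y s t i \<omega>) \<noteq> 1}
           \<le> 2 * real m * exp (- (real n * (\<mu> 1 - \<mu> 2)\<^sup>2)
                                  / (4 * real m * (\<Sum>j\<in>{1..K}. (\<sigma> j)\<^sup>2)))"
proof -
  interpret prob_space M by fact
  show ?thesis
  proof (cases "ns = 0")
    case True
    have "measure M {\<omega>\<in>space M. sh_out ch sel K m ns (\<lambda>s t i. Y s t i \<omega>) \<noteq> 1} \<le> 1"
      by (rule prob_le_1)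
    also have "\<dots> \<le> 2 * real m" using m by simp
    finally show ?thesis using True n by simp
  next
    case False
    interpret sh_var_bandit M Y \<mu> \<sigma> K m ns ch sel
      using assms False
      by unfold_locales (auto simp: integral_allocation_def allocation_def Let_def)
    have "real n * (\<mu> 1 - \<mu> 2)\<^sup>2 / (4 * real m * (\<Sum>j\<in>{1..K}. (\<sigma> j)\<^sup>2))
        = real ns * (\<mu> 1 - \<mu> 2)\<^sup>2 / (4 * (\<Sum>j\<in>{1..K}. (\<sigma> j)\<^sup>2))"
      using m n by simp
    with prob_error_le show ?thesis by simp
  qed
qed

end
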